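(* Let $n\ge 1$, let $w_n\ge\dots\ge w_1>0$ be real weights and let $B\in\{1,\dots,n\}$. Consider RLS (defined in the context) minimising the penalised fitness \[ f(x)=\sum_{i=1}^n w_i x_i+\max\{0,\,B-b(x)\}\cdot(n w_n+1),\qquad b(x)=\sum_{i=1}^n x_i . \] Starting with an arbitrary initial search point, the expected optimisation time of RLS is $O(n^2)$, where the hidden constant does not depend on $n$, the weights, or $B$.
   Context: Problem: minimise $f_{\mathrm{obj}}(x)=\sum_{i=1}^n w_ix_i$ over $x\in\{0,1\}^n$ subject to $x_1+\dots+x_n\ge B$. A search point is optimal if it satisfies the constraint and minimises $f_{\mathrm{obj}}$ among all points satisfying the constraint. RLS: maintain a current search point $x_t$; in each iteration choose $b\in\{1,2\}$ uniformly at random, create $x'$ by flipping $b$ distinct bits of $x_t$ chosen uniformly at random; set $x_{t+1}=x'$ if $f(x')\le f(x_t)$, otherwise $x_{t+1}=x_t$. The optimisation time is the number of iterations until an optimal search point has been sampled for the first time. *)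

theory Defs
  imports "HOL-Probability.Probability"
begin

text \<open>Search points x \<in> {0,1}^n are represented as index sets x \<subseteq> {1..n}:
  i \<in> x means x_i = 1. Flipping the bits in a set S is the symmetric difference.\<close>

definition search_space :: "nat \<Rightarrow> nat set set" where
  "search_space n = {x. x \<subseteq> {1..n}}"

definition ones :: "nat set \<Rightarrow> nat" where
  "ones x = card x"

definition f_obj :: "(nat \<Rightarrow> real) \<Rightarrow> nat set \<Rightarrow> real" where
  "f_obj w x = (\<Sum>i\<in>x. w i)"

definition fit :: "nat \<Rightarrow> (nat \<Rightarrow> real) \<Rightarrow> nat \<Rightarrow> nat set \<Rightarrow> real" where
  "fit n w B x = f_obj w x + max 0 (real B - real (ones x)) * (real n * w n + 1)"

definition optimal :: "nat \<Rightarrow> (nat \<Rightarrow> real) \<Rightarrow> nat \<Rightarrow> nat set \<Rightarrow> bool" where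
  "optimal n w B x \<longleftrightarrow> x \<in> search_space n \<and> ones x \<ge> B \<and>
     (\<forall>y \<in> search_space n. ones y \<ge> B \<longrightarrow> f_obj w x \<le> f_obj w y)"

text \<open>Mutation: choose b \<in> {1,2} uniformly, then a uniformly random set of b distinct
  positions to flip. (If n < b, i.e. n = 1 and b = 2, no bits are flipped.)\<close>
definition flip_set :: "nat \<Rightarrow> nat set pmf" where
  "flip_set n = do {
     b \<leftarrow> pmf_of_set {1, 2::nat};
     (if b \<le> n then pmf_of_set {S. S \<subseteq> {1..n} \<and> card S = b} else return_pmf {})
   }"

definition rls_step :: "nat \<Rightarrow> (nat \<Rightarrow> real) \<Rightarrow> nat \<Rightarrow> nat set \<Rightarrow> nat set pmf" where
  "rls_step n w B x = do {
     S \<leftarrow> flip_set n;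
     let x' = (x - S) \<union> (S - x);
     return_pmf (if fit n w B x' \<le> fit n w B x then x' else x)
   }"

fun rls_traj :: "nat \<Rightarrow> (nat \<Rightarrow> real) \<Rightarrow> nat \<Rightarrow> nat \<Rightarrow> nat set \<Rightarrow> nat set list pmf" where
  "rls_traj n w B 0 x = return_pmf [x]"
| "rls_traj n w B (Suc t) x = do {
     y \<leftarrow> rls_step n w B x;
     ys \<leftarrow> rls_traj n w B t y;
     return_pmf (x # ys)
   }"

text \<open>Pr[T > t] where T is the optimisation time: none of x_0,...,x_t is optimal.\<close>
definition not_yet_opt_prob :: "nat \<Rightarrow> (nat \<Rightarrow> real) \<Rightarrow> nat \<Rightarrow> nat set \<Rightarrow> nat \<Rightarrow> real" where
  "not_yet_opt_prob n w B x0 t =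
     measure_pmf.prob (rls_traj n w B t x0) {xs. \<forall>y \<in> set xs. \<not> optimal n w B y}"

text \<open>Expected optimisation time E[T] = sum_{t \<ge> 0} Pr[T > t] (tail-sum formula,
  valued in [0,\<infinity>]).\<close>
definition expected_opt_time :: "nat \<Rightarrow> (nat \<Rightarrow> real) \<Rightarrow> nat \<Rightarrow> nat set \<Rightarrow> ennreal" where
  "expected_opt_time n w B x0 = (\<Sum>t. ennreal (not_yet_opt_prob n w B x0 t))"

end

theory Submission
  imports Defs
begin

text \<open>A fitness-level argument. Points with fewer than \<open>B\<close> ones get potential
  \<open>2n + (B - card x)\<close>, points with more than \<open>B\<close> ones \<open>n + (card x - B)\<close>, and points
  with exactly \<open>B\<close> ones the number of bits that are misplaced with respect to the
  threshold weight \<open>w B\<close>. One unit of penalty outweighs every objective value, so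
  accepted steps never increase the potential. Outside the balanced range a specific
  1-bit flip lowers the potential, which happens with probability \<open>1/(2n)\<close>; a balanced
  point with \<open>k\<close> misplaced bits admits at least \<open>k\<^sup>2/4\<close> improving swaps, each a specific
  2-bit flip of probability at least \<open>1/n\<^sup>2\<close>. Summing the expected waiting times,
  \<open>4n\<^sup>2/k\<^sup>2\<close> on the balanced levels and \<open>2n\<close> on the others, gives at most \<open>14 n\<^sup>2\<close>.\<close>

section \<open>Hitting times of Markov chains\<close>

lemma measure_pmf_prob_bind:
  "measure_pmf.prob (bind_pmf p f) A = measure_pmf.expectation p (\<lambda>x. measure_pmf.prob (f x) A)"
  unfolding measure_pmf_bind
  by (rule measure_pmf.measure_bind[where N="count_space UNIV"])
     (auto simp: space_subprob_algebra
           intro!: measurable_pmf_measure1 prob_space_imp_subprob_space prob_space_measure_pmf)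

fun chain_traj :: "('a \<Rightarrow> 'a pmf) \<Rightarrow> nat \<Rightarrow> 'a \<Rightarrow> 'a list pmf" where
  "chain_traj K 0 x = return_pmf [x]"
| "chain_traj K (Suc t) x = do {
     y \<leftarrow> K x;
     ys \<leftarrow> chain_traj K t y;
     return_pmf (x # ys)
   }"

definition survival_prob :: "('a \<Rightarrow> 'a pmf) \<Rightarrow> ('a \<Rightarrow> bool) \<Rightarrow> 'a \<Rightarrow> nat \<Rightarrow> real" where
  "survival_prob K P x t = measure_pmf.prob (chain_traj K t x) {xs. \<forall>y \<in> set xs. \<not> P y}"

lemma survival_prob_0: "survival_prob K P x 0 = (if P x then 0 else 1)"
  by (simp add: survival_prob_def indicator_def)

lemma survival_prob_Suc:
  "survival_prob K P x (Suc t) =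
     (if P x then 0 else measure_pmf.expectation (K x) (\<lambda>y. survival_prob K P y t))"
proof -
  have traj: "chain_traj K (Suc t) x = K x \<bind> (\<lambda>y. map_pmf (Cons x) (chain_traj K t y))"
    by (simp add: map_pmf_def)
  show ?thesis
    unfolding survival_prob_def traj measure_pmf_prob_bind measure_map_pmf
    by (cases "P x") (auto simp: vimage_def)
qed

lemma not_yet_opt_prob_eq_survival_prob:
  "not_yet_opt_prob n w B x t = survival_prob (rls_step n w B) (optimal n w B) x t"
proof -
  have "rls_traj n w B t x = chain_traj (rls_step n w B) t x"
    by (induction t arbitrary: x) simp_all
  then show ?thesis
    unfolding not_yet_opt_prob_def survival_prob_def by simp
qed

lemma sum_survival_prob_le_drift_bound:
  fixes K :: "'a \<Rightarrow> 'a pmf" and V :: "'a \<Rightarrow> real"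
  assumes closed: "\<And>x. x \<in> X \<Longrightarrow> set_pmf (K x) \<subseteq> X"
    and finite: "\<And>x. x \<in> X \<Longrightarrow> finite (set_pmf (K x))"
    and nonneg: "\<And>x. x \<in> X \<Longrightarrow> 0 \<le> V x"
    and drift: "\<And>x. x \<in> X \<Longrightarrow> \<not> P x \<Longrightarrow> 1 + measure_pmf.expectation (K x) V \<le> V x"
    and "x \<in> X"
  shows "(\<Sum>t<T. survival_prob K P x t) \<le> V x"
  using \<open>x \<in> X\<close>
proof (induction T arbitrary: x)
  case 0
  then show ?case using nonneg by simp
next
  case (Suc T)
  have int: "integrable (measure_pmf (K x)) f" for f :: "'a \<Rightarrow> real"
    using finite[OF Suc.prems] by (rule integrable_measure_pmf_finite)
  show ?case
  proof (cases "P x")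
    case True
    then show ?thesis using nonneg[OF Suc.prems]
      by (simp add: survival_prob_0 survival_prob_Suc sum.lessThan_Suc_shift del: sum.lessThan_Suc)
  next
    case False
    have "(\<Sum>t<Suc T. survival_prob K P x t)
        = 1 + measure_pmf.expectation (K x) (\<lambda>y. \<Sum>t<T. survival_prob K P y t)"
      using False int
      by (simp add: survival_prob_0 survival_prob_Suc sum.lessThan_Suc_shift del: sum.lessThan_Suc)
    also have "\<dots> \<le> 1 + measure_pmf.expectation (K x) V"
      using Suc.IH closed[OF Suc.prems]
      by (intro add_left_mono integral_mono_AE int) (auto simp: AE_measure_pmf_iff)
    also have "\<dots> \<le> V x"
      using drift[OF Suc.prems False] .
    finally show ?thesis .
  qed
qed

lemma additive_drift:
  fixes K :: "'a \<Rightarrow> 'a pmf" and V :: "'a \<Rightarrow> real"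
  assumes "\<And>x. x \<in> X \<Longrightarrow> set_pmf (K x) \<subseteq> X"
    and "\<And>x. x \<in> X \<Longrightarrow> finite (set_pmf (K x))"
    and "\<And>x. x \<in> X \<Longrightarrow> 0 \<le> V x"
    and "\<And>x. x \<in> X \<Longrightarrow> \<not> P x \<Longrightarrow> 1 + measure_pmf.expectation (K x) V \<le> V x"
    and "x \<in> X"
  shows "(\<Sum>t. ennreal (survival_prob K P x t)) \<le> ennreal (V x)"
proof -
  have "(\<Sum>t<T. ennreal (survival_prob K P x t)) \<le> ennreal (V x)" for T
    using sum_survival_prob_le_drift_bound[OF assms, where T=T]
    by (simp add: sum_ennreal survival_prob_def ennreal_leI)
  then show ?thesis
    unfolding suminf_eq_SUP by (rule SUP_least)
qed

text \<open>The fitness-level bound: \<open>1 / p m\<close> is the expected waiting time to leave level \<open>m\<close>.\<close>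

definition level_potential :: "(nat \<Rightarrow> real) \<Rightarrow> nat \<Rightarrow> real" where
  "level_potential p l = (\<Sum>m = 1..l. 1 / p m)"

lemma level_potential_nonneg: "(\<And>m. 0 < m \<Longrightarrow> 0 < p m) \<Longrightarrow> 0 \<le> level_potential p l"
  unfolding level_potential_def by (intro sum_nonneg) (auto intro: less_imp_le)

lemma level_potential_mono:
  "(\<And>m. 0 < m \<Longrightarrow> 0 < p m) \<Longrightarrow> k \<le> l \<Longrightarrow> level_potential p k \<le> level_potential p l"
  unfolding level_potential_def by (intro sum_mono2) (auto intro: less_imp_le)

lemma level_potential_less:
  assumes "\<And>m. 0 < m \<Longrightarrow> 0 < p m" and "k < l"
  shows "level_potential p k + 1 / p l \<le> level_potential p l"
proof -
  obtain l' where l: "l = Suc l'" using \<open>k < l\<close> by (cases l) auto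
  have "level_potential p k \<le> level_potential p l'"
    using assms l by (intro level_potential_mono) auto
  then show ?thesis unfolding l level_potential_def by simp
qed

lemma level_potential_drift:
  fixes q :: "'a pmf" and level :: "'a \<Rightarrow> nat"
  assumes p_pos: "\<And>m. 0 < m \<Longrightarrow> 0 < p m"
    and finite: "finite (set_pmf q)"
    and no_incr: "\<And>y. y \<in> set_pmf q \<Longrightarrow> level y \<le> l"
    and progress: "p l \<le> measure_pmf.prob q {y. level y < l}"
    and "0 < l"
  shows "1 + measure_pmf.expectation q (\<lambda>y. level_potential p (level y)) \<le> level_potential p l"
proof -
  let ?D = "{y. level y < l}"
  have "level_potential p (level y) \<le> level_potential p l - indicator ?D y / p l"
    if "y \<in> set_pmf q" for y
    using level_potential_less[of p "level y" l, OF p_pos]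
      level_potential_mono[of p "level y" l, OF p_pos]
      no_incr[OF that]
    by (cases "level y < l") (auto simp: indicator_def)
  then have "measure_pmf.expectation q (\<lambda>y. level_potential p (level y))
      \<le> measure_pmf.expectation q (\<lambda>y. level_potential p l - indicator ?D y / p l)"
    using finite by (intro integral_mono_AE) (auto simp: AE_measure_pmf_iff intro: integrable_measure_pmf_finite)
  also have "\<dots> = level_potential p l - measure_pmf.prob q ?D / p l"
    using finite by (simp add: integrable_measure_pmf_finite)
  also have "\<dots> \<le> level_potential p l - 1"
    using progress p_pos[OF \<open>0 < l\<close>] by (simp add: le_divide_eq)
  finally show ?thesis by simp
qed

theorem fitness_level_method:
  fixes K :: "'a \<Rightarrow> 'a pmf" and level :: "'a \<Rightarrow> nat" and p :: "nat \<Rightarrow> real"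
  assumes closed: "\<And>x. x \<in> X \<Longrightarrow> set_pmf (K x) \<subseteq> X"
    and finite: "\<And>x. x \<in> X \<Longrightarrow> finite (set_pmf (K x))"
    and p_pos: "\<And>m. 0 < m \<Longrightarrow> 0 < p m"
    and no_incr: "\<And>x y. x \<in> X \<Longrightarrow> y \<in> set_pmf (K x) \<Longrightarrow> level y \<le> level x"
    and target: "\<And>x. x \<in> X \<Longrightarrow> level x = 0 \<Longrightarrow> P x"
    and progress: "\<And>x. x \<in> X \<Longrightarrow> 0 < level x \<Longrightarrow>
                     p (level x) \<le> measure_pmf.prob (K x) {y. level y < level x}"
    and "x \<in> X"
  shows "(\<Sum>t. ennreal (survival_prob K P x t)) \<le> ennreal (level_potential p (level x))"
proof (rule additive_drift[OF closed finite _ _ \<open>x \<in> X\<close>])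
  fix x assume "x \<in> X" and "\<not> P x"
  then have "0 < level x" using target by blast
  with \<open>x \<in> X\<close> show "1 + measure_pmf.expectation (K x) (\<lambda>y. level_potential p (level y))
      \<le> level_potential p (level x)"
    by (intro level_potential_drift p_pos finite no_incr progress)
qed (auto intro: level_potential_nonneg p_pos)

section \<open>The mutation operator\<close>

definition subsets_of_card :: "nat \<Rightarrow> nat \<Rightarrow> nat set set" where
  "subsets_of_card n b = {S. S \<subseteq> {1..n} \<and> card S = b}"

lemma finite_subsets_of_card: "finite (subsets_of_card n b)"
  unfolding subsets_of_card_def by (rule finite_subset[of _ "Pow {1..n}"]) auto

lemma card_subsets_of_card: "card (subsets_of_card n b) = n choose b"
  unfolding subsets_of_card_def using n_subsets[of "{1..n}" b] by simp

lemma subsets_of_card_nonempty: "b \<le> n \<Longrightarrow> subsets_of_card n b \<noteq> {}"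
  using card_subsets_of_card[of n b] by (metis card.empty zero_less_binomial_iff less_irrefl)

lemma flip_set_eq:
  "flip_set n = pmf_of_set {1, 2} \<bind>
     (\<lambda>b. if b \<le> n then pmf_of_set (subsets_of_card n b) else return_pmf {})"
  unfolding flip_set_def subsets_of_card_def ..

lemma set_pmf_flip_set: "S \<in> set_pmf (flip_set n) \<Longrightarrow> S \<subseteq> {1..n} \<and> card S \<le> 2"
  using finite_subsets_of_card subsets_of_card_nonempty
  by (fastforce simp: flip_set_eq subsets_of_card_def split: if_splits)

lemma measure_flip_set:
  "measure_pmf.prob (flip_set n) A =
     (measure_pmf.prob (if 1 \<le> n then pmf_of_set (subsets_of_card n 1) else return_pmf {}) A
    + measure_pmf.prob (if 2 \<le> n then pmf_of_set (subsets_of_card n 2) else return_pmf {}) A) / 2"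
  unfolding flip_set_eq measure_pmf_prob_bind by (subst integral_pmf_of_set) auto

lemma measure_flip_set_ge_singleton:
  assumes "j \<in> {1..n}" and "{j} \<in> A"
  shows "1 / (2 * real n) \<le> measure_pmf.prob (flip_set n) A"
proof -
  have n: "1 \<le> n" using assms by auto
  have "{j} \<in> subsets_of_card n 1 \<inter> A" using assms by (auto simp: subsets_of_card_def)
  then have "1 \<le> card (subsets_of_card n 1 \<inter> A)"
    using finite_subsets_of_card by (metis One_nat_def Suc_leI card_gt_0_iff emptyE finite_Int)
  then have "1 / real n \<le> measure_pmf.prob (pmf_of_set (subsets_of_card n 1)) A"
    using subsets_of_card_nonempty[OF n] finite_subsets_of_card card_subsets_of_card[of n 1]
    by (subst measure_pmf_of_set) (auto simp: divide_right_mono)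
  moreover have "1 / (2 * real n) \<le> (a + b) / 2" if "1 / real n \<le> a" and "0 \<le> b" for a b
    using that by simp
  ultimately show ?thesis
    unfolding measure_flip_set if_P[OF n] by (blast intro: measure_nonneg)
qed

lemma measure_flip_set_ge_pairs:
  assumes "2 \<le> n" and "G \<subseteq> subsets_of_card n 2 \<inter> A"
  shows "real (card G) / (real n)\<^sup>2 \<le> measure_pmf.prob (flip_set n) A"
proof -
  have card_G: "card G \<le> card (subsets_of_card n 2 \<inter> A)"
    using assms(2) finite_subsets_of_card by (intro card_mono) auto
  have choose_pos: "0 < n choose 2" using assms(1) by simp
  have "2 * (n choose 2) \<le> n * n"
    unfolding choose_two by (metis div_times_less_eq_dividend mult.commute mult_le_mono2 diff_le_self le_trans)
  then have "real (card G) / (real n)\<^sup>2 \<le> real (card G) / (2 * real (n choose 2))"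
    using choose_pos
    by (intro divide_left_mono) (auto simp: power2_eq_square simp flip: of_nat_mult)
  also have "\<dots> \<le> real (card (subsets_of_card n 2 \<inter> A)) / (2 * real (n choose 2))"
    using card_G choose_pos by (simp add: divide_right_mono)
  also have "\<dots> = measure_pmf.prob (pmf_of_set (subsets_of_card n 2)) A / 2"
    using subsets_of_card_nonempty[OF assms(1)] finite_subsets_of_card
    by (subst measure_pmf_of_set) (auto simp: card_subsets_of_card)
  also have "\<dots> \<le> measure_pmf.prob (flip_set n) A"
    unfolding measure_flip_set using assms(1) by simp
  finally show ?thesis .
qed

definition rls_next :: "nat \<Rightarrow> (nat \<Rightarrow> real) \<Rightarrow> nat \<Rightarrow> nat set \<Rightarrow> nat set \<Rightarrow> nat set" where
  "rls_next n w B x S = (if fit n w B (sym_diff x S) \<le> fit n w B x then sym_diff x S else x)"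

lemma rls_step_eq_map_pmf: "rls_step n w B x = map_pmf (rls_next n w B x) (flip_set n)"
  unfolding rls_step_def rls_next_def map_pmf_def by (simp add: Let_def)

lemma measure_rls_step:
  "measure_pmf.prob (rls_step n w B x) A = measure_pmf.prob (flip_set n) (rls_next n w B x -` A)"
  unfolding rls_step_eq_map_pmf by simp

lemma card_sym_diff:
  assumes "finite x" and "finite S"
  shows "card (sym_diff x S) + 2 * card (S \<inter> x) = card x + card S"
proof -
  have "card (sym_diff x S) = card (x - S) + card (S - x)"
    using assms by (subst card_Un_disjoint) auto
  moreover have "card x = card (x - S) + card (S \<inter> x)"
    using assms by (metis Int_commute card_Int_Diff add.commute)
  moreover have "card S = card (S - x) + card (S \<inter> x)"
    using assms by (metis card_Int_Diff add.commute)
  ultimately show ?thesis by simp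
qed

lemma sym_diff_card_eq_cases:
  assumes "finite x" and "finite S" and "card S \<le> 2" and "card (sym_diff x S) = card x"
  obtains "S = {}" | i j where "i \<in> x" and "j \<notin> x" and "S = {i, j}"
proof (cases "S \<inter> x = {}")
  case True
  then show ?thesis
    using that(1) card_sym_diff[OF assms(1,2)] assms by simp
next
  case False
  then have "card (S \<inter> x) = 1" and "card (S - x) = 1"
    using card_sym_diff[OF assms(1,2)] assms card_Int_Diff[of S x] card_gt_0_iff[of "S \<inter> x"]
    by auto
  then obtain i j where "S \<inter> x = {i}" and "S - x = {j}"
    by (metis card_1_singletonE)
  then show ?thesis
    using that(2)[of i j] by blast
qed

lemma f_obj_swap:
  assumes "i \<in> x" and "j \<notin> x" and "finite x"
  shows "f_obj w (insert j (x - {i})) = f_obj w x - w i + w j"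
  using assms unfolding f_obj_def by (simp add: sum_diff1)

lemma card_doubletons_image:
  assumes "P \<subseteq> x \<times> (- x)"
  shows "card ((\<lambda>(i, j). {i, j}) ` P) = card P"
proof (rule card_image, rule inj_onI)
  fix p q assume "p \<in> P" and "q \<in> P" and eq: "(\<lambda>(i, j). {i, j}) p = (\<lambda>(i, j). {i, j}) q"
  obtain i j i' j' where "p = (i, j)" and "q = (i', j')" by fastforce
  with \<open>p \<in> P\<close> \<open>q \<in> P\<close> eq assms show "p = q" by (auto simp: doubleton_eq_iff)
qed

section \<open>A potential for RLS on sorted weights\<close>

locale sorted_weights =
  fixes n :: nat and w :: "nat \<Rightarrow> real" and B :: nat
  assumes n_pos: "1 \<le> n" and w1_pos: "0 < w 1"
    and w_step: "\<forall>i. 1 \<le> i \<and> i < n \<longrightarrow> w i \<le> w (Suc i)"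
    and B_pos: "1 \<le> B" and B_le_n: "B \<le> n"
begin

lemma w_mono:
  assumes "1 \<le> i" and "i \<le> j" and "j \<le> n"
  shows "w i \<le> w j"
  using assms(2,3)
proof (induction j rule: dec_induct)
  case (step m)
  then show ?case using w_step[rule_format, of m] assms(1) by auto
qed simp

lemma w_pos: "1 \<le> i \<Longrightarrow> i \<le> n \<Longrightarrow> 0 < w i"
  using w_mono[of 1 i] w1_pos by auto

lemma w_le_w_n: "1 \<le> i \<Longrightarrow> i \<le> n \<Longrightarrow> w i \<le> w n"
  using w_mono[of i n] by auto

definition penalty_unit :: real where
  "penalty_unit = real n * w n + 1"

lemma f_obj_nonneg: "x \<subseteq> {1..n} \<Longrightarrow> 0 \<le> f_obj w x"
  unfolding f_obj_def using w_pos by (intro sum_nonneg) (force intro: less_imp_le)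

lemma f_obj_less_penalty_unit:
  assumes "x \<subseteq> {1..n}"
  shows "f_obj w x < penalty_unit"
proof -
  have "f_obj w x \<le> real (card x) * w n"
    unfolding f_obj_def using assms w_le_w_n by (intro sum_bounded_above) auto
  also have "\<dots> \<le> real n * w n"
    using card_mono[OF _ assms] w_pos[of n] n_pos by (intro mult_right_mono) auto
  finally show ?thesis unfolding penalty_unit_def by simp
qed

lemma fit_eq: "fit n w B x = f_obj w x + real (B - card x) * penalty_unit"
  unfolding fit_def penalty_unit_def ones_def
  by (cases "card x \<le> B") (auto simp: max_def)

lemma deficit_accepted_le:
  assumes "x \<subseteq> {1..n}" and "y \<subseteq> {1..n}" and "fit n w B y \<le> fit n w B x"
  shows "B - card y \<le> B - card x"
proof (rule ccontr)
  assume "\<not> ?thesis"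
  then have "(real (B - card x) + 1) * penalty_unit \<le> real (B - card y) * penalty_unit"
    using f_obj_less_penalty_unit[OF assms(1)] f_obj_nonneg[OF assms(1)]
    by (intro mult_right_mono) auto
  then show False
    using assms(3) f_obj_less_penalty_unit[OF assms(1)] f_obj_nonneg[OF assms(2)]
    unfolding fit_eq by (simp add: algebra_simps)
qed

definition light :: "nat set" where
  "light = {i \<in> {1..n}. w i < w B}"

definition heavy :: "nat set" where
  "heavy = {i \<in> {1..n}. w B < w i}"

lemma light_subset: "light \<subseteq> {1..n}"
  and finite_light: "finite light" and finite_heavy: "finite heavy"
  and light_heavy_disjoint: "light \<inter> heavy = {}"
  unfolding light_def heavy_def by auto

lemma card_light_less: "card light < B"
proof -
  have "light \<subseteq> {1..<B}"
    unfolding light_def using w_mono[of B] B_pos by (force simp: not_less[symmetric])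
  from card_mono[OF _ this] show ?thesis using B_pos by simp
qed

lemma card_not_heavy_ge: "B \<le> card ({1..n} - heavy)"
proof -
  have "{1..B} \<subseteq> {1..n} - heavy"
    unfolding heavy_def using w_mono B_le_n by fastforce
  from card_mono[OF _ this] show ?thesis by simp
qed

text \<open>An optimum takes all light positions and fills up with positions of weight
  \<open>w B\<close>; a balanced point is misplaced at a heavy 1-bit or a light 0-bit.\<close>

definition misplaced :: "nat set \<Rightarrow> nat" where
  "misplaced x = card (x \<inter> heavy) + card (light - x)"

definition potential :: "nat set \<Rightarrow> nat" where
  "potential x =
     (if card x < B then 2 * n + (B - card x)
      else if B < card x then n + (card x - B)
      else misplaced x)"

lemma misplaced_le: "x \<subseteq> {1..n} \<Longrightarrow> misplaced x \<le> n"
proof -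
  assume x: "x \<subseteq> {1..n}"
  have "misplaced x = card ((x \<inter> heavy) \<union> (light - x))"
    unfolding misplaced_def using finite_light finite_heavy by (subst card_Un_disjoint) auto
  also have "\<dots> \<le> card {1..n}"
    using x light_subset by (intro card_mono) auto
  finally show ?thesis by simp
qed

lemma potential_le:
  assumes "x \<subseteq> {1..n}"
  shows "potential x \<le> 3 * n"
  using misplaced_le[OF assms] card_mono[OF _ assms] B_le_n unfolding potential_def by auto

lemma f_obj_ge_optimum:
  assumes y: "y \<subseteq> {1..n}" and "B \<le> card y"
  shows "sum w light + w B * (real B - real (card light)) \<le> f_obj w y"
proof -
  have fin: "finite y" using y finite_subset by blast
  have w_B: "0 < w B" using w_pos B_pos B_le_n by auto
  have "sum w (light - y) \<le> real (card (light - y)) * w B"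
    by (rule sum_bounded_above) (auto simp: light_def)
  moreover have "real (card (y - light)) * w B \<le> sum w (y - light)"
    by (rule sum_bounded_below) (use y in \<open>force simp: light_def\<close>)
  moreover have "card light = card (light \<inter> y) + card (light - y)"
    using finite_light by (metis card_Int_Diff)
  moreover have "card y = card (light \<inter> y) + card (y - light)"
    using fin by (metis Int_commute card_Int_Diff)
  moreover have "sum w light = sum w (light \<inter> y) + sum w (light - y)"
    using finite_light by (metis sum.Int_Diff)
  moreover have "f_obj w y = sum w (light \<inter> y) + sum w (y - light)"
    unfolding f_obj_def using fin by (metis Int_commute sum.Int_Diff)
  moreover have "w B * real B \<le> w B * real (card y)"
    using \<open>B \<le> card y\<close> w_B by simp
  ultimately show ?thesis by (simp add: algebra_simps)
qed

lemma f_obj_eq_optimum: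
  assumes x: "x \<subseteq> {1..n}" and "card x = B" and "misplaced x = 0"
  shows "f_obj w x = sum w light + w B * (real B - real (card light))"
proof -
  have fin: "finite x" using x finite_subset by blast
  have light_x: "light \<subseteq> x" and "x \<inter> heavy = {}"
    using \<open>misplaced x = 0\<close> finite_light finite_heavy unfolding misplaced_def by auto
  then have "w i = w B" if "i \<in> x - light" for i
    using x that unfolding light_def heavy_def by force
  then have "sum w (x - light) = w B * real (card (x - light))"
    by simp
  moreover have "card (x - light) = B - card light"
    using \<open>card x = B\<close> light_x fin by (simp add: card_Diff_subset finite_subset)
  moreover have "f_obj w x = sum w light + sum w (x - light)"
    unfolding f_obj_def using fin light_x by (metis add.commute sum.subset_diff)
  ultimately show ?thesis using card_light_less by simp
qed

lemma optimal_if_potential_zero: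
  assumes x: "x \<subseteq> {1..n}" and "potential x = 0"
  shows "optimal n w B x"
proof -
  have "card x = B" and "misplaced x = 0"
    using \<open>potential x = 0\<close> B_pos unfolding potential_def by (auto split: if_splits)
  then show ?thesis
    using x f_obj_eq_optimum f_obj_ge_optimum
    unfolding optimal_def search_space_def ones_def by auto
qed

lemma potential_feasible_le:
  assumes "x \<subseteq> {1..n}" and "B \<le> card x"
  shows "potential x \<le> 2 * n"
  using misplaced_le[OF assms(1)] card_mono[OF _ assms(1)] assms(2) unfolding potential_def by auto

lemma misplaced_swap:
  assumes "i \<in> x" and "j \<notin> x"
  shows "misplaced (insert j (x - {i})) + of_bool (i \<in> heavy) + of_bool (j \<in> light)
       = misplaced x + of_bool (j \<in> heavy) + of_bool (i \<in> light)"
proof -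
  have fin: "finite (x \<inter> heavy)" "finite (light - x)"
    using finite_heavy finite_light by auto
  have "insert j (x - {i}) \<inter> heavy = (if j \<in> heavy then insert j else id) ((x \<inter> heavy) - {i})"
    by auto
  moreover have "i \<in> heavy \<Longrightarrow> 0 < card (x \<inter> heavy)"
    using fin assms card_gt_0_iff by blast
  ultimately have heavy_part: "card (insert j (x - {i}) \<inter> heavy) + of_bool (i \<in> heavy)
      = card (x \<inter> heavy) + of_bool (j \<in> heavy)"
    using fin assms
    by (cases "j \<in> heavy"; cases "i \<in> heavy") (simp_all add: card_Diff_singleton card_insert_if)
  have "light - insert j (x - {i}) = (if i \<in> light then insert i else id) ((light - x) - {j})"
    using assms by auto
  moreover have "j \<in> light \<Longrightarrow> 0 < card (light - x)"
    using fin assms card_gt_0_iff by blast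
  ultimately have light_part: "card (light - insert j (x - {i})) + of_bool (j \<in> light)
      = card (light - x) + of_bool (i \<in> light)"
    using fin assms
    by (cases "j \<in> light"; cases "i \<in> light") (simp_all add: card_Diff_singleton card_insert_if)
  show ?thesis
    using heavy_part light_part unfolding misplaced_def by simp
qed

lemma misplaced_swap_le:
  assumes "i \<in> x" and "j \<notin> x" and "i \<in> {1..n}" and "j \<in> {1..n}" and "w j \<le> w i"
  shows "misplaced (insert j (x - {i})) \<le> misplaced x"
proof -
  have "j \<in> heavy \<Longrightarrow> i \<in> heavy" and "i \<in> light \<Longrightarrow> j \<in> light"
    using assms unfolding heavy_def light_def by auto
  then show ?thesis
    using misplaced_swap[OF assms(1,2)] by (auto simp: of_bool_def split: if_splits)
qed

lemma accepted_above_target: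
  assumes x: "x \<subseteq> {1..n}" and S: "S \<subseteq> {1..n}" "card S \<le> 2" and "B \<le> card x"
    and accept: "fit n w B (sym_diff x S) \<le> fit n w B x"
  shows "B \<le> card (sym_diff x S)" and "card (sym_diff x S) \<le> card x"
    and "f_obj w (sym_diff x S) \<le> f_obj w x"
proof -
  let ?y = "sym_diff x S"
  have fin: "finite x" "finite S" using x S finite_subset by auto
  show "B \<le> card ?y"
    using deficit_accepted_le[OF x _ accept] x S \<open>B \<le> card x\<close> by auto
  then show f_le: "f_obj w ?y \<le> f_obj w x"
    using accept \<open>B \<le> card x\<close> unfolding fit_eq by simp
  show "card ?y \<le> card x"
  proof (rule ccontr)
    assume "\<not> ?thesis"
    then have "card (S \<inter> x) = 0" and "S \<noteq> {}"
      using card_sym_diff[OF fin] S(2) by auto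
    then have "S \<inter> x = {}" and "S \<noteq> {}"
      using fin by auto
    then have "f_obj w ?y = f_obj w x + sum w S"
      unfolding f_obj_def using fin by (simp add: Un_Diff_Int Int_commute sum.union_disjoint Diff_triv)
    moreover have "0 < sum w S"
      using \<open>S \<noteq> {}\<close> fin S w_pos by (intro sum_pos) auto
    ultimately show False using f_le by simp
  qed
qed

lemma potential_accepted_le:
  assumes x: "x \<subseteq> {1..n}" and S: "S \<subseteq> {1..n}" "card S \<le> 2"
    and y_eq: "y = sym_diff x S" and accept: "fit n w B y \<le> fit n w B x"
  shows "potential y \<le> potential x"
proof -
  have y: "y \<subseteq> {1..n}" using x S y_eq by auto
  have fin: "finite x" "finite S" using x S finite_subset by auto
  note above_target = accepted_above_target[OF x S _ accept[unfolded y_eq], folded y_eq]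
  consider "card x < B" | "B < card x" | "card x = B" by linarith
  then show ?thesis
  proof cases
    case 1
    show ?thesis
    proof (cases "card y < B")
      case True
      then show ?thesis
        using 1 deficit_accepted_le[OF x y accept] unfolding potential_def by simp
    next
      case False
      then show ?thesis
        using 1 potential_feasible_le[OF y] unfolding potential_def[of x] by simp
    qed
  next
    case 2
    then have "B \<le> card y" and "card y \<le> card x"
      using above_target(1,2) by auto
    then show ?thesis
      using 2 misplaced_le[OF y] unfolding potential_def by auto
  next
    case 3
    then have "card y = card x" and f_le: "f_obj w y \<le> f_obj w x"
      using above_target by auto
    have card_y: "card (sym_diff x S) = card x"
      using \<open>card y = card x\<close> unfolding y_eq .
    from fin S(2) card_y show ?thesis
    proof (cases rule: sym_diff_card_eq_cases)
      case (2 i j)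
      then have swap: "y = insert j (x - {i})"
        using y_eq by auto
      then have "w j \<le> w i"
        using f_le f_obj_swap[of i x j w] 2 fin by simp
      then have "misplaced y \<le> misplaced x"
        unfolding swap using misplaced_swap_le[of i x j] 2 x S by auto
      with \<open>card y = card x\<close> 3 show ?thesis
        unfolding potential_def by simp
    qed (simp add: y_eq)
  qed
qed

lemma potential_rls_next_le:
  assumes "x \<subseteq> {1..n}" and "S \<subseteq> {1..n}" and "card S \<le> 2"
  shows "potential (rls_next n w B x S) \<le> potential x"
  using potential_accepted_le[OF assms refl] by (simp add: rls_next_def)

lemma set_pmf_rls_step:
  assumes "x \<subseteq> {1..n}" and "y \<in> set_pmf (rls_step n w B x)"
  shows "y \<subseteq> {1..n}" and "potential y \<le> potential x"
proof -
  obtain S where S: "S \<in> set_pmf (flip_set n)" and y: "y = rls_next n w B x S"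
    using assms(2) unfolding rls_step_eq_map_pmf by auto
  have "rls_next n w B x S \<subseteq> x \<union> S"
    unfolding rls_next_def by auto
  then show "y \<subseteq> {1..n}"
    using assms(1) set_pmf_flip_set[OF S] y by blast
  show "potential y \<le> potential x"
    using potential_rls_next_le[OF assms(1)] set_pmf_flip_set[OF S] unfolding y by auto
qed

lemma finite_set_pmf_rls_step:
  assumes "x \<subseteq> {1..n}"
  shows "finite (set_pmf (rls_step n w B x))"
proof (rule finite_subset)
  show "set_pmf (rls_step n w B x) \<subseteq> Pow {1..n}"
    using set_pmf_rls_step(1)[OF assms] by blast
qed simp

end

section \<open>Progress probabilities\<close>

definition rls_level_prob :: "nat \<Rightarrow> nat \<Rightarrow> real" where
  "rls_level_prob n m = (if m \<le> n then real m ^ 2 / (4 * real n ^ 2) else 1 / (2 * real n))"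

lemma rls_level_prob_pos: "1 \<le> n \<Longrightarrow> 0 < m \<Longrightarrow> 0 < rls_level_prob n m"
  unfolding rls_level_prob_def by auto

lemma sum_inverse_squares_le: "1 \<le> N \<Longrightarrow> (\<Sum>m = 1..N. 1 / real m ^ 2) \<le> 2 - 1 / real N"
proof (induction N rule: dec_induct)
  case (step N)
  have N: "1 \<le> real N" using step by simp
  have "1 / (real N + 1) ^ 2 \<le> 1 / (real N * (real N + 1))"
    using N by (intro divide_left_mono) (auto simp: power2_eq_square intro: mult_right_mono)
  also have "\<dots> = 1 / real N - 1 / (real N + 1)"
    using N by (simp add: field_simps)
  finally show ?case using step by (simp add: add.commute)
qed simp

lemma level_potential_rls_level_prob_le:
  assumes "1 \<le> n" and "l \<le> 3 * n"
  shows "level_potential (rls_level_prob n) l \<le> 14 * real n ^ 2"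
proof -
  have "level_potential (rls_level_prob n) l \<le> level_potential (rls_level_prob n) (3 * n)"
    using assms rls_level_prob_pos by (intro level_potential_mono) auto
  also have "\<dots> \<le> (\<Sum>m = 1..3 * n. 4 * real n ^ 2 * (1 / real m ^ 2) + 2 * real n)"
    unfolding level_potential_def
  proof (intro sum_mono)
    fix m :: nat
    show "1 / rls_level_prob n m \<le> 4 * real n ^ 2 * (1 / real m ^ 2) + 2 * real n"
      by (cases "m \<le> n") (simp_all add: rls_level_prob_def)
  qed
  also have "\<dots> = 4 * real n ^ 2 * (\<Sum>m = 1..3 * n. 1 / real m ^ 2) + 3 * real n * (2 * real n)"
    by (simp add: sum.distrib sum_distrib_left)
  also have "\<dots> \<le> 4 * real n ^ 2 * 2 + 3 * real n * (2 * real n)"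
  proof -
    have "(\<Sum>m = 1..3 * n. 1 / real m ^ 2) \<le> 2 - 1 / real (3 * n)"
      using assms(1) by (intro sum_inverse_squares_le) simp
    also have "\<dots> \<le> 2" by simp
    finally show ?thesis by (intro add_right_mono mult_left_mono) auto
  qed
  also have "\<dots> = 14 * real n ^ 2"
    by (simp add: power2_eq_square)
  finally show ?thesis .
qed

lemma quarter_square_le_mult:
  fixes k a b :: real
  assumes "0 \<le> k" and "k \<le> 2 * a" and "a \<le> b"
  shows "k ^ 2 / 4 \<le> a * b"
proof -
  have "k ^ 2 \<le> (2 * a) ^ 2" using assms by (intro power_mono) auto
  moreover have "a * a \<le> a * b" using assms by (intro mult_left_mono) auto
  ultimately show ?thesis by (simp add: power2_eq_square)
qed

context sorted_weights
begin

lemma decrease_prob_deficient: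
  assumes x: "x \<subseteq> {1..n}" and "card x < B"
  shows "1 / (2 * real n) \<le> measure_pmf.prob (rls_step n w B x) {y. potential y < potential x}"
proof -
  have fin: "finite x" using x finite_subset by blast
  obtain j where j: "j \<in> {1..n}" "j \<notin> x"
    using card_mono[OF fin, of "{1..n}"] \<open>card x < B\<close> B_le_n by force
  have "w j < penalty_unit"
    using f_obj_less_penalty_unit[of "{j}"] j by (simp add: f_obj_def)
  then have "fit n w B (insert j x) \<le> fit n w B x"
    using j fin \<open>card x < B\<close> unfolding fit_eq by (simp add: f_obj_def algebra_simps)
  moreover have "sym_diff x {j} = insert j x" using j by auto
  ultimately have "rls_next n w B x {j} = insert j x" by (simp add: rls_next_def)
  moreover have "misplaced (insert j x) \<le> n"
    using x j by (intro misplaced_le) auto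
  then have "potential (insert j x) < potential x"
    using j fin \<open>card x < B\<close> unfolding potential_def by auto
  ultimately show ?thesis
    unfolding measure_rls_step by (intro measure_flip_set_ge_singleton[OF j(1)]) simp
qed

lemma decrease_prob_excess:
  assumes x: "x \<subseteq> {1..n}" and "B < card x"
  shows "1 / (2 * real n) \<le> measure_pmf.prob (rls_step n w B x) {y. potential y < potential x}"
proof -
  have fin: "finite x" using x finite_subset by blast
  obtain i where i: "i \<in> x" using \<open>B < card x\<close> by fastforce
  then have "i \<in> {1..n}" using x by auto
  then have "fit n w B (x - {i}) \<le> fit n w B x"
    using i fin \<open>B < card x\<close> w_pos[of i] unfolding fit_eq by (simp add: f_obj_def sum_diff1)
  moreover have "sym_diff x {i} = x - {i}" using i by auto
  ultimately have "rls_next n w B x {i} = x - {i}" by (simp add: rls_next_def)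
  moreover have "misplaced (x - {i}) \<le> n"
    using x by (intro misplaced_le) auto
  then have "potential (x - {i}) < potential x"
    using i fin \<open>B < card x\<close> unfolding potential_def by auto
  ultimately show ?thesis
    unfolding measure_rls_step by (intro measure_flip_set_ge_singleton[OF \<open>i \<in> {1..n}\<close>]) simp
qed

definition improving_swap :: "nat set \<Rightarrow> nat \<Rightarrow> nat \<Rightarrow> bool" where
  "improving_swap x i j \<longleftrightarrow> w j \<le> w i \<and> misplaced (insert j (x - {i})) < misplaced x"

text \<open>Each pair of improving swaps is a distinct 2-bit flip, hit with probability at
  least \<open>1 / n\<^sup>2\<close>.\<close>

lemma decrease_prob_by_swaps:
  assumes x: "x \<subseteq> {1..n}" and "card x = B" and "2 \<le> n"
    and P: "P \<subseteq> x \<times> ({1..n} - x)"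
    and improving: "\<And>i j. (i, j) \<in> P \<Longrightarrow> improving_swap x i j"
  shows "real (card P) / (real n)\<^sup>2 \<le> measure_pmf.prob (rls_step n w B x) {y. potential y < potential x}"
proof -
  have fin: "finite x" using x finite_subset by blast
  let ?G = "(\<lambda>(i, j). {i, j}) ` P"
  have "card ?G = card P"
    using P by (intro card_doubletons_image[of P x]) auto
  moreover have G: "?G \<subseteq> subsets_of_card n 2 \<inter> (rls_next n w B x -` {y. potential y < potential x})"
  proof
    fix T assume "T \<in> ?G"
    then obtain i j where ij: "(i, j) \<in> P" and T: "T = {i, j}" by auto
    then have i: "i \<in> x" and j: "j \<in> {1..n}" "j \<notin> x" using P by auto
    have swap: "sym_diff x {i, j} = insert j (x - {i})" using i j by auto
    have card_swap: "card (insert j (x - {i})) = B"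
      using \<open>card x = B\<close> i j fin B_pos by (simp add: card_insert_if)
    have "fit n w B (insert j (x - {i})) \<le> fit n w B x"
      unfolding fit_eq card_swap \<open>card x = B\<close> using f_obj_swap[OF i j(2) fin] improving[OF ij]
      by (simp add: improving_swap_def)
    then have "rls_next n w B x {i, j} = insert j (x - {i})"
      by (simp add: rls_next_def swap)
    then have "potential (rls_next n w B x {i, j}) < potential x"
      using improving[OF ij] card_swap \<open>card x = B\<close> unfolding potential_def improving_swap_def by simp
    moreover have "{i, j} \<in> subsets_of_card n 2"
      using i j x by (auto simp: subsets_of_card_def card_insert_if)
    ultimately show "T \<in> subsets_of_card n 2 \<inter> (rls_next n w B x -` {y. potential y < potential x})"
      unfolding T by simp
  qed
  ultimately show ?thesis
    unfolding measure_rls_step using measure_flip_set_ge_pairs[OF \<open>2 \<le> n\<close> G] by simp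
qed

lemma card_heavy_ones_le:
  assumes x: "x \<subseteq> {1..n}" and "card x = B"
  shows "card (x \<inter> heavy) \<le> card ({1..n} - heavy - x)"
proof -
  have fin: "finite x" using x finite_subset by blast
  have "card ({1..n} - heavy) = card (x - heavy) + card ({1..n} - heavy - x)"
    using x fin by (subst card_Un_disjoint[symmetric]) (auto intro: arg_cong[where f=card])
  moreover have "card x = card (x \<inter> heavy) + card (x - heavy)"
    using fin by (metis card_Int_Diff)
  ultimately show ?thesis
    using card_not_heavy_ge \<open>card x = B\<close> by linarith
qed

lemma card_light_zeros_le:
  assumes x: "x \<subseteq> {1..n}" and "card x = B"
  shows "card (light - x) \<le> card (x - light)"
proof -
  have "card light = card (light \<inter> x) + card (light - x)"
    using finite_light by (metis card_Int_Diff)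
  moreover have "card x = card (light \<inter> x) + card (x - light)"
    using x finite_subset by (metis Int_commute card_Int_Diff finite_atLeastAtMost)
  ultimately show ?thesis
    using card_light_less \<open>card x = B\<close> by linarith
qed

lemma improving_swap_heavy_one:
  assumes "i \<in> x \<inter> heavy" and "j \<in> {1..n} - heavy - x"
  shows "improving_swap x i j"
proof -
  have "i \<notin> light" using assms light_heavy_disjoint by auto
  then show ?thesis
    using misplaced_swap[of i x j] assms unfolding improving_swap_def heavy_def by auto
qed

lemma improving_swap_light_zero:
  assumes "x \<subseteq> {1..n}" and "i \<in> x - light" and "j \<in> light - x"
  shows "improving_swap x i j"
proof -
  have "j \<notin> heavy" and "i \<in> {1..n}" using assms light_heavy_disjoint by auto
  then show ?thesis
    using misplaced_swap[of i x j] assms unfolding improving_swap_def light_def by auto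
qed

text \<open>With \<open>a\<close> heavy ones and \<open>c\<close> light zeros, swapping a heavy one with a non-heavy
  zero gives at least \<open>a\<^sup>2\<close> improving swaps, and swapping a non-light one with a light
  zero at least \<open>c\<^sup>2\<close>; the larger of the two is at least \<open>(a + c)\<^sup>2/4\<close>.\<close>

lemma improving_swaps_exist:
  assumes x: "x \<subseteq> {1..n}" and "card x = B"
  obtains P where "P \<subseteq> x \<times> ({1..n} - x)" and "\<And>i j. (i, j) \<in> P \<Longrightarrow> improving_swap x i j"
    and "real (misplaced x) ^ 2 / 4 \<le> real (card P)"
proof (cases "card (light - x) \<le> card (x \<inter> heavy)")
  case True
  let ?P = "(x \<inter> heavy) \<times> ({1..n} - heavy - x)"
  have "real (misplaced x) ^ 2 / 4 \<le> real (card ?P)"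
    using quarter_square_le_mult[of "real (misplaced x)" "real (card (x \<inter> heavy))"] True
      card_heavy_ones_le[OF assms]
    by (simp add: card_cartesian_product misplaced_def)
  then show ?thesis
    using that[of ?P] improving_swap_heavy_one by blast
next
  case False
  let ?P = "(x - light) \<times> (light - x)"
  have "real (misplaced x) ^ 2 / 4 \<le> real (card ?P)"
    using quarter_square_le_mult[of "real (misplaced x)" "real (card (light - x))"] False
      card_light_zeros_le[OF assms]
    by (simp add: card_cartesian_product misplaced_def mult.commute)
  then show ?thesis
    using that[of ?P] improving_swap_light_zero[OF x] light_subset by blast
qed

lemma decrease_prob_balanced:
  assumes x: "x \<subseteq> {1..n}" and "card x = B" and "0 < potential x"
  shows "real (potential x) ^ 2 / (4 * real n ^ 2)
           \<le> measure_pmf.prob (rls_step n w B x) {y. potential y < potential x}"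
proof -
  have potential_x: "potential x = misplaced x"
    unfolding potential_def using \<open>card x = B\<close> by simp
  have "2 \<le> n"
  proof (rule ccontr)
    assume "\<not> 2 \<le> n"
    then have "n = 1" and "B = 1" using n_pos B_pos B_le_n by auto
    then have "light = {}" and "heavy = {}" unfolding light_def heavy_def by auto
    then show False using \<open>0 < potential x\<close> potential_x unfolding misplaced_def by simp
  qed
  obtain P where P: "P \<subseteq> x \<times> ({1..n} - x)" and "\<And>i j. (i, j) \<in> P \<Longrightarrow> improving_swap x i j"
    and card_P: "real (misplaced x) ^ 2 / 4 \<le> real (card P)"
    using improving_swaps_exist[OF x \<open>card x = B\<close>] by blast
  then have "real (card P) / (real n)\<^sup>2
      \<le> measure_pmf.prob (rls_step n w B x) {y. potential y < potential x}"
    by (intro decrease_prob_by_swaps[OF x \<open>card x = B\<close> \<open>2 \<le> n\<close>])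
  moreover have "real (potential x) ^ 2 / (4 * real n ^ 2) \<le> real (card P) / (real n)\<^sup>2"
    using divide_right_mono[OF card_P, of "(real n)\<^sup>2"] potential_x by simp
  ultimately show ?thesis by linarith
qed

lemma decrease_prob_ge_level_prob:
  assumes "x \<subseteq> {1..n}" and "0 < potential x"
  shows "rls_level_prob n (potential x)
           \<le> measure_pmf.prob (rls_step n w B x) {y. potential y < potential x}"
proof -
  consider "card x < B" | "B < card x" | "card x = B" by linarith
  then show ?thesis
  proof cases
    case 1
    then have "n < potential x" unfolding potential_def by simp
    then show ?thesis
      using decrease_prob_deficient[OF assms(1) 1] unfolding rls_level_prob_def by simp
  next
    case 2
    then have "n < potential x" unfolding potential_def by simp
    then show ?thesis
      using decrease_prob_excess[OF assms(1) 2] unfolding rls_level_prob_def by simp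
  next
    case 3
    then have "potential x \<le> n"
      using misplaced_le[OF assms(1)] unfolding potential_def by simp
    then show ?thesis
      using decrease_prob_balanced[OF assms(1) 3 assms(2)] unfolding rls_level_prob_def by simp
  qed
qed

lemma expected_opt_time_le:
  assumes "x0 \<in> search_space n"
  shows "expected_opt_time n w B x0 \<le> ennreal (14 * real n ^ 2)"
proof -
  have "expected_opt_time n w B x0 \<le> ennreal (level_potential (rls_level_prob n) (potential x0))"
    unfolding expected_opt_time_def not_yet_opt_prob_eq_survival_prob
  proof (rule fitness_level_method[where X = "search_space n"])
    show "set_pmf (rls_step n w B x) \<subseteq> search_space n" if "x \<in> search_space n" for x
      using set_pmf_rls_step(1) that by (auto simp: search_space_def)
    show "finite (set_pmf (rls_step n w B x))" if "x \<in> search_space n" for x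
      using finite_set_pmf_rls_step that by (simp add: search_space_def)
    show "potential y \<le> potential x" if "x \<in> search_space n" and "y \<in> set_pmf (rls_step n w B x)" for x y
      using set_pmf_rls_step(2) that by (simp add: search_space_def)
    show "0 < rls_level_prob n m" if "0 < m" for m
      using rls_level_prob_pos[OF n_pos that] .
    show "optimal n w B x" if "x \<in> search_space n" and "potential x = 0" for x
      using optimal_if_potential_zero that by (simp add: search_space_def)
    show "rls_level_prob n (potential x) \<le> measure_pmf.prob (rls_step n w B x) {y. potential y < potential x}"
      if "x \<in> search_space n" and "0 < potential x" for x
      using decrease_prob_ge_level_prob that by (simp add: search_space_def)
  qed (rule assms)
  also have "\<dots> \<le> ennreal (14 * real n ^ 2)"
    using assms potential_le n_pos
    by (intro ennreal_leI level_potential_rls_level_prob_le) (auto simp: search_space_def)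
  finally show ?thesis .
qed

end

theorem theorem3:
  "\<exists>C::real. \<forall>(n::nat) (w::nat \<Rightarrow> real) (B::nat) (x0::nat set).
     n \<ge> 1 \<longrightarrow> w 1 > 0 \<longrightarrow> (\<forall>i. 1 \<le> i \<and> i < n \<longrightarrow> w i \<le> w (Suc i)) \<longrightarrow>
     1 \<le> B \<longrightarrow> B \<le> n \<longrightarrow> x0 \<in> search_space n \<longrightarrow>
     expected_opt_time n w B x0 \<le> ennreal (C * (real n)^2)"
proof (intro exI[of _ 14] allI impI)
  fix n :: nat and w :: "nat \<Rightarrow> real" and B :: nat and x0 :: "nat set"
  assume "n \<ge> 1" and "w 1 > 0" and "\<forall>i. 1 \<le> i \<and> i < n \<longrightarrow> w i \<le> w (Suc i)"
    and "1 \<le> B" and "B \<le> n" and "x0 \<in> search_space n"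
  then have "sorted_weights n w B"
    by unfold_locales
  then show "expected_opt_time n w B x0 \<le> ennreal (14 * (real n)^2)"
    using \<open>x0 \<in> search_space n\<close> by (rule sorted_weights.expected_opt_time_le)
qed

end
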